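(* Let $(S,T,F,M_0,\ell)$ be a Petri net, $T_+\subseteq T$ a set of transitions such that $F\restriction(S\cup T_+)$ is acyclic, and $S_+\subseteq S$ a set of places. Let $\bar M\in\mathbb N^{S_+}$ and let $H$ be a finite multiset in $\mathbb N^{T_+}$ such that $\bar M+[\![H]\!]\in\mathbb N^S$. Then (a) for any faithful place $s$ w.r.t. $T_+$ and $S_+$, $(\bar M+[\![H]\!])(s)\cdot{}^*s\le\bar M$; (b) for any $k\in\mathbb N$ and any transition $t$ with $(\bar M+[\![H]\!])[k\cdot\{t\}\rangle$, we have $k\cdot{}^*t\le\bar M$.
   Context: A Petri net $(S,T,F,M_0,\ell)$ has disjoint $S,T$ and $F:(S\times T)\cup(T\times S)\to\mathbb N$. ${}^\bullet x(y)=F(y,x)$, $x^\bullet(y)=F(x,y)$, extended additively to finite multisets $H$ of transitions; $[\![H]\!]=H^\bullet-{}^\bullet H$ (a signed multiset of places; multisets over $S_+$ are identified with multisets over $S$ that vanish outside $S_+$). $M[G\rangle$ iff ${}^\bullet G\le M$. $F\restriction(S\cup T_+)$ is acyclic iff there is no nonempty path $x_0x_1\cdots x_n$ with $x_0=x_n$, all $x_i\in S\cup T_+$ and $F(x_i,x_{i+1})>0$. A path is a sequence $\pi=x_0x_1\cdots x_n$ of places and transitions with $F(x_i,x_{i+1})>0$ for $0\le i<n$; its arc weight is $F(\pi)=\prod_{i=0}^{n-1}F(x_i,x_{i+1})$. A place $s$ is faithful w.r.t. $T_+$ and $S_+$ iff $|\{s\}\cap S_+|+\sum_{t\in T_+}F(t,s)=1$.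 A path from $x_0$ to $x_n$ is faithful iff every $x_i$ with $0\le i<n$ is either a transition in $T_+$ or a faithful place. For $x\in S\cup T$, ${}^*x\in(\mathbb N\cup\{\infty\})^{S_+}$ is given by ${}^*x(s)=\sup\{F(\pi)\mid\pi$ a faithful path from $s\in S_+$ to $x\}$ (0 if no such path); scalar multiplication uses the convention $0\cdot\infty=0$. *)

theory Defs
  imports Main "HOL-Library.Multiset" "HOL-Library.Extended_Nat"
begin

(* A Petri net is given by a type of places 's, a type of transitions 't
(so S = UNIV and T = UNIV, automatically disjoint), and the flow relation F split into
  pre s t = F(s,t)  and  post t s = F(t,s).
The initial marking and the labelling play no role in the statement. *)

fun flow :: "('s \<Rightarrow> 't \<Rightarrow> nat) \<Rightarrow> ('t \<Rightarrow> 's \<Rightarrow> nat)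
              \<Rightarrow> ('s + 't) \<Rightarrow> ('s + 't) \<Rightarrow> nat" where
  "flow pre post (Inl s) (Inr t) = pre s t"
| "flow pre post (Inr t) (Inl s) = post t s"
| "flow pre post _ _ = 0"

definition preset_ms :: "('s \<Rightarrow> 't \<Rightarrow> nat) \<Rightarrow> 't multiset \<Rightarrow> 's \<Rightarrow> nat" where
  "preset_ms pre G s = (\<Sum>t\<in>#G. pre s t)"

definition postset_ms :: "('t \<Rightarrow> 's \<Rightarrow> nat) \<Rightarrow> 't multiset \<Rightarrow> 's \<Rightarrow> nat" where
  "postset_ms post G s = (\<Sum>t\<in>#G. post t s)"

definition effect :: "('s \<Rightarrow> 't \<Rightarrow> nat) \<Rightarrow> ('t \<Rightarrow> 's \<Rightarrow> nat) \<Rightarrow> 't multiset \<Rightarrow> 's \<Rightarrow> int" where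
  "effect pre post H s = int (postset_ms post H s) - int (preset_ms pre H s)"

definition enabled :: "('s \<Rightarrow> 't \<Rightarrow> nat) \<Rightarrow> ('s \<Rightarrow> nat) \<Rightarrow> 't multiset \<Rightarrow> bool" where
  "enabled pre M G \<longleftrightarrow> (\<forall>s. preset_ms pre G s \<le> M s)"

definition acyclic_on :: "('s \<Rightarrow> 't \<Rightarrow> nat) \<Rightarrow> ('t \<Rightarrow> 's \<Rightarrow> nat) \<Rightarrow> 't set \<Rightarrow> bool" where
  "acyclic_on pre post Tp \<longleftrightarrow>
     acyclic {(x, y). x \<in> range Inl \<union> Inr ` Tp \<and> y \<in> range Inl \<union> Inr ` Tp
                      \<and> flow pre post x y > 0}"

(* Faithful place: |{s} \<inter> S+| + \<Sum>_{t\<in>T+} F(t,s) = 1 (the possibly infinite sum of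
naturals is written as a finite sum over its support, which must be finite). *)
definition faithful :: "('t \<Rightarrow> 's \<Rightarrow> nat) \<Rightarrow> 't set \<Rightarrow> 's set \<Rightarrow> 's \<Rightarrow> bool" where
  "faithful post Tp Sp s \<longleftrightarrow>
     finite {t\<in>Tp. post t s \<noteq> 0} \<and>
     (if s \<in> Sp then 1 else 0) + (\<Sum>t\<in>{t\<in>Tp. post t s \<noteq> 0}. post t s) = (1::nat)"

definition is_path :: "('s + 't \<Rightarrow> 's + 't \<Rightarrow> nat) \<Rightarrow> ('s + 't) list \<Rightarrow> bool" where
  "is_path F xs \<longleftrightarrow> xs \<noteq> [] \<and> (\<forall>i < length xs - 1. F (xs ! i) (xs ! Suc i) > 0)"

definition path_weight :: "('s + 't \<Rightarrow> 's + 't \<Rightarrow> nat) \<Rightarrow> ('s + 't) list \<Rightarrow> nat" where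
  "path_weight F xs = (\<Prod>i < length xs - 1. F (xs ! i) (xs ! Suc i))"

definition faithful_path ::
  "('s \<Rightarrow> 't \<Rightarrow> nat) \<Rightarrow> ('t \<Rightarrow> 's \<Rightarrow> nat) \<Rightarrow> 't set \<Rightarrow> 's set
     \<Rightarrow> ('s + 't) list \<Rightarrow> ('s + 't) \<Rightarrow> ('s + 't) \<Rightarrow> bool" where
  "faithful_path pre post Tp Sp xs a b \<longleftrightarrow>
     is_path (flow pre post) xs \<and> hd xs = a \<and> last xs = b \<and>
     (\<forall>i < length xs - 1. (case xs ! i of Inl s \<Rightarrow> faithful post Tp Sp s | Inr t \<Rightarrow> t \<in> Tp))"

(* *x(s) = sup of arc weights of faithful paths from s \<in> S+ to x (0 if none; Sup {} = 0
in enat; outside S+ it is 0, identifying vectors over S+ with vectors over S). *)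
definition star :: "('s \<Rightarrow> 't \<Rightarrow> nat) \<Rightarrow> ('t \<Rightarrow> 's \<Rightarrow> nat) \<Rightarrow> 't set \<Rightarrow> 's set
                    \<Rightarrow> ('s + 't) \<Rightarrow> 's \<Rightarrow> enat" where
  "star pre post Tp Sp x s =
     Sup {enat (path_weight (flow pre post) xs) | xs.
            s \<in> Sp \<and> faithful_path pre post Tp Sp xs (Inl s) x}"

end

theory Submission
  imports Defs
begin

text \<open>A faithful place \<open>s \<notin> S\<^sub>+\<close> has a unique producer \<open>t\<^sub>0 \<in> T\<^sub>+\<close>, and \<open>F(t\<^sub>0,s) = 1\<close>; since
  \<open>Mbar\<close> vanishes off \<open>S\<^sub>+\<close>, the quantity \<open>N(s) = Mbar(s) + H\<^sup>\<bullet>(s)\<close> equals \<open>H(t\<^sub>0)\<close> there. As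
  \<open>Mbar + \<lbrakk>H\<rbrakk> \<ge> 0\<close>, every input place \<open>s''\<close> of \<open>t\<^sub>0\<close> satisfies
  \<open>H(t\<^sub>0) \<cdot> F(s'',t\<^sub>0) \<le> \<^sup>\<bullet>H(s'') \<le> N(s'')\<close>. Along a faithful path from \<open>s' \<in> S\<^sub>+\<close> these
  inequalities multiply up to \<open>N(x) \<cdot> F(\<pi>) \<le> Mbar(s')\<close> for its end point \<open>x\<close> (with \<open>N(t)\<close>
  replaced by any \<open>k\<close> such that \<open>k \<cdot> F(s'',t) \<le> N(s'')\<close> for all \<open>s''\<close>), and both claims follow
  because \<open>M \<le> N\<close>. The induction is on the length of the path.\<close>

lemma is_path_snoc:
  assumes "xs \<noteq> []"
  shows "is_path F (xs @ [y]) \<longleftrightarrow> is_path F xs \<and> F (last xs) y > 0"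
proof -
  obtain n where n: "length xs = Suc n" using assms by (cases xs) auto
  have "(\<forall>i < Suc n. F ((xs @ [y]) ! i) ((xs @ [y]) ! Suc i) > 0) \<longleftrightarrow>
        (\<forall>i < n. F (xs ! i) (xs ! Suc i) > 0) \<and> F (xs ! n) y > 0"
    using n by (simp only: All_less_Suc) (auto simp: nth_append)
  then show ?thesis using assms n unfolding is_path_def by (simp add: last_conv_nth)
qed

lemma path_weight_snoc:
  assumes "xs \<noteq> []"
  shows "path_weight F (xs @ [y]) = path_weight F xs * F (last xs) y"
proof -
  obtain n where n: "length xs = Suc n" using assms by (cases xs) auto
  with assms show ?thesis unfolding path_weight_def
    by (simp add: nth_append last_conv_nth)
qed

lemma faithful_path_Nil: "\<not> faithful_path pre post Tp Sp [] a b"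
  by (simp add: faithful_path_def is_path_def)

lemma faithful_path_singleton: "faithful_path pre post Tp Sp [x] a b \<longleftrightarrow> a = x \<and> b = x"
  by (auto simp: faithful_path_def is_path_def)

lemma faithful_path_snoc:
  assumes "xs \<noteq> []"
  shows "faithful_path pre post Tp Sp (xs @ [y]) a b \<longleftrightarrow>
     faithful_path pre post Tp Sp xs a (last xs) \<and> flow pre post (last xs) y > 0 \<and> b = y \<and>
     (case last xs of Inl s \<Rightarrow> faithful post Tp Sp s | Inr t \<Rightarrow> t \<in> Tp)"
proof -
  obtain n where n: "length xs = Suc n" using assms by (cases xs) auto
  have "(\<forall>i < length (xs @ [y]) - 1. P ((xs @ [y]) ! i)) \<longleftrightarrow>
        (\<forall>i < length xs - 1. P (xs ! i)) \<and> P (last xs)" for P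
    using n assms by (simp only: All_less_Suc length_append_singleton diff_Suc_1)
       (auto simp: nth_append last_conv_nth)
  then show ?thesis using assms unfolding faithful_path_def
    by (auto simp: is_path_snoc)
qed

lemma faithful_post_eq_0_if_in_Sp:
  assumes "faithful post Tp Sp s" "s \<in> Sp" "t \<in> Tp"
  shows "post t s = 0"
proof -
  have "finite {t\<in>Tp. post t s \<noteq> 0}" "(\<Sum>t\<in>{t\<in>Tp. post t s \<noteq> 0}. post t s) = 0"
    using assms(1,2) unfolding faithful_def by auto
  then show ?thesis using assms(3) by simp
qed

lemma faithful_unique_producer:
  assumes "faithful post Tp Sp s" "t\<^sub>0 \<in> Tp" "post t\<^sub>0 s > 0"
  shows "s \<notin> Sp" "post t\<^sub>0 s = 1" "\<And>t. t \<in> Tp \<Longrightarrow> t \<noteq> t\<^sub>0 \<Longrightarrow> post t s = 0"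
proof -
  show not_Sp: "s \<notin> Sp" using faithful_post_eq_0_if_in_Sp assms by fastforce
  let ?A = "{t\<in>Tp. post t s \<noteq> 0}"
  have fin: "finite ?A" and sum_1: "(\<Sum>t\<in>?A. post t s) = 1"
    using assms(1) not_Sp unfolding faithful_def by auto
  have "(\<Sum>t\<in>?A. post t s) = post t\<^sub>0 s + (\<Sum>t\<in>?A - {t\<^sub>0}. post t s)"
    using fin assms(2,3) by (intro sum.remove) auto
  with sum_1 assms(3) have "post t\<^sub>0 s = 1" and rest: "(\<Sum>t\<in>?A - {t\<^sub>0}. post t s) = 0"
    by linarith+
  then show "post t\<^sub>0 s = 1" by simp
  fix t assume "t \<in> Tp" "t \<noteq> t\<^sub>0"
  with fin rest show "post t s = 0" by auto
qed

lemma postset_ms_eq_0: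
  assumes "\<And>t. t \<in># H \<Longrightarrow> post t s = 0"
  shows "postset_ms post H s = 0"
  using assms by (simp add: postset_ms_def)

lemma postset_ms_eq_count:
  assumes "\<And>t. t \<in># H \<Longrightarrow> t \<noteq> t\<^sub>0 \<Longrightarrow> post t s = 0" "post t\<^sub>0 s = 1"
  shows "postset_ms post H s = count H t\<^sub>0"
  using assms unfolding postset_ms_def by (induction H) auto

lemma count_mult_le_preset_ms: "count H t * pre s t \<le> preset_ms pre H s"
  unfolding preset_ms_def by (induction H) auto

lemma preset_ms_replicate_mset: "preset_ms pre (replicate_mset k t) s = k * pre s t"
  unfolding preset_ms_def by (induction k) auto

lemma enat_mult_star_le:
  assumes "\<And>xs. s' \<in> Sp \<Longrightarrow> faithful_path pre post Tp Sp xs (Inl s') x \<Longrightarrow>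
             m * path_weight (flow pre post) xs \<le> c"
  shows "enat m * star pre post Tp Sp x s' \<le> enat c"
proof -
  let ?A = "{enat (path_weight (flow pre post) xs) | xs.
               s' \<in> Sp \<and> faithful_path pre post Tp Sp xs (Inl s') x}"
  have bound: "enat m * a \<le> enat c" if "a \<in> ?A" for a
    using that assms by auto
  show ?thesis
  proof (cases "m = 0 \<or> ?A = {}")
    case True
    then show ?thesis by (auto simp: star_def zero_enat_def[symmetric] bot_enat_def)
  next
    case False
    have "a \<le> enat c" if "a \<in> ?A" for a
    proof -
      obtain n where a: "a = enat n" using \<open>a \<in> ?A\<close> by blast
      with bound[OF that] have "m * n \<le> c" by simp
      moreover have "n \<le> m * n" using False by simp
      ultimately have "n \<le> c" by (rule le_trans[rotated])
      then show ?thesis using a by simp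
    qed
    then have fin: "finite ?A" by (rule finite_enat_bounded)
    have ne: "?A \<noteq> {}" using False by blast
    have "Sup ?A = Max ?A" unfolding Sup_enat_def by (simp only: if_not_P[OF ne] if_P[OF fin])
    then have "Sup ?A \<in> ?A" using Max_in[OF fin ne] by simp
    then show ?thesis unfolding star_def by (rule bound)
  qed
qed

context
  fixes pre :: "'s \<Rightarrow> 't \<Rightarrow> nat" and post :: "'t \<Rightarrow> 's \<Rightarrow> nat"
    and Tp :: "'t set" and Sp :: "'s set"
    and Mbar :: "'s \<Rightarrow> nat" and H :: "'t multiset"
  assumes Mbar_supp: "\<forall>s. s \<notin> Sp \<longrightarrow> Mbar s = 0"
    and H_supp: "set_mset H \<subseteq> Tp"
    and nonneg: "\<forall>s. int (Mbar s) + effect pre post H s \<ge> 0"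
begin

lemma preset_ms_le: "preset_ms pre H s \<le> Mbar s + postset_ms post H s"
  using nonneg[rule_format, of s] unfolding effect_def by simp

lemma faithful_path_bounds:
  assumes "s' \<in> Sp"
  shows "(\<forall>s. faithful_path pre post Tp Sp xs (Inl s') (Inl s) \<longrightarrow> faithful post Tp Sp s \<longrightarrow>
            (Mbar s + postset_ms post H s) * path_weight (flow pre post) xs \<le> Mbar s')
       \<and> (\<forall>t k. (\<forall>s. k * pre s t \<le> Mbar s + postset_ms post H s) \<longrightarrow>
            faithful_path pre post Tp Sp xs (Inl s') (Inr t) \<longrightarrow>
            k * path_weight (flow pre post) xs \<le> Mbar s')"
proof (induction xs rule: rev_induct)
  case Nil
  then show ?case by (simp add: faithful_path_Nil)
next
  case (snoc y ys)
  note IH_place = snoc.IH[THEN conjunct1, rule_format]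
  note IH_transition = snoc.IH[THEN conjunct2, rule_format]
  let ?w = "path_weight (flow pre post)"
  show ?case
  proof (intro conjI allI impI)
    fix s
    assume path: "faithful_path pre post Tp Sp (ys @ [y]) (Inl s') (Inl s)"
      and faithful_s: "faithful post Tp Sp s"
    show "(Mbar s + postset_ms post H s) * ?w (ys @ [y]) \<le> Mbar s'"
    proof (cases "ys = []")
      case True
      with path have "s = s'" "y = Inl s" by (auto simp: faithful_path_singleton)
      moreover have "postset_ms post H s = 0"
        using \<open>s = s'\<close> assms H_supp faithful_s
        by (auto intro: postset_ms_eq_0 faithful_post_eq_0_if_in_Sp)
      ultimately show ?thesis using True by (simp add: path_weight_def)
    next
      case False
      from path False obtain t\<^sub>0 where last_ys: "last ys = Inr t\<^sub>0" and y: "y = Inl s"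
        by (cases "last ys") (auto simp: faithful_path_snoc)
      with path False have path_ys: "faithful_path pre post Tp Sp ys (Inl s') (Inr t\<^sub>0)"
        and "t\<^sub>0 \<in> Tp" "post t\<^sub>0 s > 0"
        by (auto simp: faithful_path_snoc)
      note producer = faithful_unique_producer[OF faithful_s \<open>t\<^sub>0 \<in> Tp\<close> \<open>post t\<^sub>0 s > 0\<close>]
      have "Mbar s + postset_ms post H s = count H t\<^sub>0"
        using producer H_supp Mbar_supp by (auto intro!: postset_ms_eq_count)
      moreover have "?w (ys @ [y]) = ?w ys"
        using False last_ys y producer by (simp add: path_weight_snoc)
      moreover have "count H t\<^sub>0 * ?w ys \<le> Mbar s'"
        by (intro IH_transition[OF _ path_ys] allI le_trans[OF count_mult_le_preset_ms preset_ms_le])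
      ultimately show ?thesis by simp
    qed
  next
    fix t k
    assume k_bound: "\<forall>s. k * pre s t \<le> Mbar s + postset_ms post H s"
      and path: "faithful_path pre post Tp Sp (ys @ [y]) (Inl s') (Inr t)"
    have "ys \<noteq> []" using path by (auto simp: faithful_path_singleton)
    with path obtain s'' where last_ys: "last ys = Inl s''" and y: "y = Inr t"
      by (cases "last ys") (auto simp: faithful_path_snoc)
    with path \<open>ys \<noteq> []\<close> have "faithful_path pre post Tp Sp ys (Inl s') (Inl s'')"
      and "faithful post Tp Sp s''"
      by (auto simp: faithful_path_snoc)
    note IH = IH_place[OF this]
    have "k * ?w (ys @ [y]) = k * pre s'' t * ?w ys"
      using \<open>ys \<noteq> []\<close> last_ys y by (simp add: path_weight_snoc)
    also have "\<dots> \<le> (Mbar s'' + postset_ms post H s'') * ?w ys"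
      using k_bound by (intro mult_right_mono) auto
    also have "\<dots> \<le> Mbar s'" by (rule IH)
    finally show "k * ?w (ys @ [y]) \<le> Mbar s'" .
  qed
qed

lemma faithful_path_to_place_bound:
  assumes "s' \<in> Sp" "faithful_path pre post Tp Sp xs (Inl s') (Inl s)" "faithful post Tp Sp s"
  shows "(Mbar s + postset_ms post H s) * path_weight (flow pre post) xs \<le> Mbar s'"
  using faithful_path_bounds[OF assms(1)] assms(2,3) by blast

lemma faithful_path_to_transition_bound:
  assumes "s' \<in> Sp" "faithful_path pre post Tp Sp xs (Inl s') (Inr t)"
    and "\<And>s. k * pre s t \<le> Mbar s + postset_ms post H s"
  shows "k * path_weight (flow pre post) xs \<le> Mbar s'"
  using faithful_path_bounds[OF assms(1)] assms(2,3) by blast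

end

theorem lemma6p7:
  fixes pre :: "'s \<Rightarrow> 't \<Rightarrow> nat" and post :: "'t \<Rightarrow> 's \<Rightarrow> nat"
    and Tp :: "'t set" and Sp :: "'s set"
    and Mbar :: "'s \<Rightarrow> nat" and H :: "'t multiset"
  assumes acyc: "acyclic_on pre post Tp"
    and Mbar_supp: "\<forall>s. s \<notin> Sp \<longrightarrow> Mbar s = 0"
    and H_supp: "set_mset H \<subseteq> Tp"
    and nonneg: "\<forall>s. int (Mbar s) + effect pre post H s \<ge> 0"
  defines "M \<equiv> (\<lambda>s. nat (int (Mbar s) + effect pre post H s))"
  shows "(\<forall>s. faithful post Tp Sp s \<longrightarrow>
            (\<forall>s'. enat (M s) * star pre post Tp Sp (Inl s) s' \<le> enat (Mbar s')))
       \<and> (\<forall>(k::nat) t. enabled pre M (replicate_mset k t) \<longrightarrow>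
            (\<forall>s'. enat k * star pre post Tp Sp (Inr t) s' \<le> enat (Mbar s')))"
proof -
  have M_le: "M s \<le> Mbar s + postset_ms post H s" for s
    unfolding M_def effect_def by simp
  show ?thesis
  proof (intro conjI allI impI enat_mult_star_le)
    fix s s' xs
    assume "faithful post Tp Sp s" "s' \<in> Sp" "faithful_path pre post Tp Sp xs (Inl s') (Inl s)"
    then have "(Mbar s + postset_ms post H s) * path_weight (flow pre post) xs \<le> Mbar s'"
      by (intro faithful_path_to_place_bound[OF Mbar_supp H_supp nonneg])
    with M_le show "M s * path_weight (flow pre post) xs \<le> Mbar s'"
      by (meson mult_le_mono1 order_trans)
  next
    fix k t s' xs
    assume enabled: "enabled pre M (replicate_mset k t)" and "s' \<in> Sp"
      "faithful_path pre post Tp Sp xs (Inl s') (Inr t)"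
    moreover have "k * pre s t \<le> Mbar s + postset_ms post H s" for s
      using enabled M_le[of s] unfolding enabled_def
      by (metis preset_ms_replicate_mset order_trans)
    ultimately show "k * path_weight (flow pre post) xs \<le> Mbar s'"
      by (intro faithful_path_to_transition_bound[OF Mbar_supp H_supp nonneg])
  qed
qed

end
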